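(* Let $G$ be a group containing commuting elements $A$ and $B$ whose centralisers $C_G(A)$ and $C_G(B)$ are both different from $G$, are both non-soluble, and are not equal to each other. Let $\mathbb{F}$ be an algebraically closed field and suppose there is a faithful representation of $G$ into $GL(3,\mathbb{F})$. Then after conjugating the image in $GL(3,\mathbb{F})$, the images of $A$ and $B$ are $$A=\begin{pmatrix}\lambda&0&0\\0&\lambda&0\\0&0&\mu\end{pmatrix},\qquad B=\begin{pmatrix}x&0&0\\0&y&0\\0&0&x\end{pmatrix}$$ for some non-zero scalars $\lambda,\mu,x,y\in\mathbb{F}$ with $\lambda\neq\mu$ and $x\neq y$. *)

theory Defs
  imports "HOL-Analysis.Analysis" "HOL-Algebra.Solvable_Groups"
    "HOL-Computational_Algebra.Polynomial"
begin

definition centraliser :: "('a, 'b) monoid_scheme \<Rightarrow> 'a \<Rightarrow> 'a set" where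
  "centraliser G a = {g \<in> carrier G. g \<otimes>\<^bsub>G\<^esub> a = a \<otimes>\<^bsub>G\<^esub> g}"

definition alg_closed :: "'f::field itself \<Rightarrow> bool" where
  "alg_closed _ \<longleftrightarrow> (\<forall>p::'f poly. degree p \<ge> 1 \<longrightarrow> (\<exists>x. poly p x = 0))"

definition GL3 :: "('f::field ^3^3) monoid" where
  "GL3 = \<lparr> carrier = {M. invertible M}, mult = (**), one = mat 1 \<rparr>"

text \<open>Diagonal 3x3 matrix diag(a,b,c); the indices of type 3 are 1, 2, 3.\<close>
definition diag3 :: "'f::field \<Rightarrow> 'f \<Rightarrow> 'f \<Rightarrow> 'f ^3^3" where
  "diag3 a b c = (\<chi> i j. if i = j then (if i = 1 then a else if i = 2 then b else c) else 0)"

end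

theory Submission
  imports Defs
begin

(* Triangularising \<rho>(A) shows that, up to conjugation, either \<rho>(A) is scalar, or the whole
   commutant of \<rho>(A) can be brought into upper triangular form simultaneously, or \<rho>(A) is
   diag(\<lambda>,\<lambda>,\<mu>) with \<lambda> \<noteq> \<mu>. By faithfulness the first alternative gives C_G(A) = G and the
   second makes C_G(A) soluble, since the invertible upper triangular 3x3 matrices have trivial
   third derived subgroup. So \<rho>(A) = diag(\<lambda>,\<lambda>,\<mu>); then \<rho>(B) commutes with it and is block
   diagonal, and triangularising its 2x2 block and repeating the case analysis leaves, apart from
   the excluded alternatives and C_G(B) = C_G(A), only the form diag(x,y,x). *)

lemma
  fixes S :: "'a::field^'n^'n"
  assumes "invertible S"
  shows matrix_inv_left: "matrix_inv S ** S = mat 1"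
    and matrix_inv_right: "S ** matrix_inv S = mat 1"
proof -
  have "\<exists>S'. S ** S' = mat 1 \<and> S' ** S = mat 1" using assms unfolding invertible_def .
  then have "S ** matrix_inv S = mat 1 \<and> matrix_inv S ** S = mat 1"
    unfolding matrix_inv_def by (rule someI_ex)
  then show "matrix_inv S ** S = mat 1" "S ** matrix_inv S = mat 1" by auto
qed

lemma invertible_matrix_inv:
  fixes S :: "'a::field^'n^'n"
  shows "invertible S \<Longrightarrow> invertible (matrix_inv S)"
  using matrix_inv_left matrix_inv_right unfolding invertible_def by blast

lemma matrix_inv_unique:
  fixes S :: "'a::field^'n^'n"
  assumes "S ** R = mat 1"
  shows "matrix_inv S = R"
proof -
  have S: "invertible S" using assms invertible_right_inverse by blast
  have "matrix_inv S = matrix_inv S ** (S ** R)" using assms by simp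
  also have "\<dots> = R" by (simp add: matrix_mul_assoc matrix_inv_left[OF S])
  finally show ?thesis .
qed

lemma matrix_inv_mult:
  fixes S R :: "'a::field^'n^'n"
  assumes "invertible S" "invertible R"
  shows "matrix_inv (S ** R) = matrix_inv R ** matrix_inv S"
proof (rule matrix_inv_unique)
  have "S ** R ** (matrix_inv R ** matrix_inv S) = S ** (R ** matrix_inv R) ** matrix_inv S"
    by (simp add: matrix_mul_assoc)
  then show "S ** R ** (matrix_inv R ** matrix_inv S) = mat 1"
    by (simp add: matrix_inv_right assms)
qed

lemma invertible_mat1: "invertible (mat 1 :: 'a::field^'n^'n)"
  unfolding invertible_def by (rule exI[of _ "mat 1"]) simp

definition mat_conj :: "'a::field^'n^'n \<Rightarrow> 'a^'n^'n \<Rightarrow> 'a^'n^'n" where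
  "mat_conj P X = matrix_inv P ** X ** P"

lemma matrix_inv_mat1: "matrix_inv (mat 1 :: 'a::field^'n^'n) = mat 1"
  by (rule matrix_inv_unique) simp

lemma mat_conj_mat1 [simp]: "mat_conj (mat 1) X = X"
  by (simp add: mat_conj_def matrix_inv_mat1)

lemma invertible_mat_conj: "invertible P \<Longrightarrow> invertible X \<Longrightarrow> invertible (mat_conj P X)"
  unfolding mat_conj_def by (intro invertible_mult invertible_matrix_inv)

lemma mat_conj_mult:
  assumes "invertible P"
  shows "mat_conj P (X ** Y) = mat_conj P X ** mat_conj P Y"
proof -
  have "mat_conj P X ** mat_conj P Y = matrix_inv P ** X ** (P ** matrix_inv P) ** Y ** P"
    unfolding mat_conj_def by (simp add: matrix_mul_assoc)
  then show ?thesis by (simp add: matrix_inv_right[OF assms] mat_conj_def matrix_mul_assoc)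
qed

lemma mat_conj_comp:
  assumes "invertible P" "invertible R"
  shows "mat_conj (P ** R) X = mat_conj R (mat_conj P X)"
  unfolding mat_conj_def by (simp add: matrix_inv_mult assms matrix_mul_assoc)

lemma mat_conj_inj:
  assumes "invertible P" "mat_conj P X = mat_conj P Y"
  shows "X = Y"
proof -
  have undo: "P ** mat_conj P Z ** matrix_inv P = Z" for Z
  proof -
    have "P ** mat_conj P Z ** matrix_inv P = (P ** matrix_inv P) ** Z ** (P ** matrix_inv P)"
      unfolding mat_conj_def by (simp add: matrix_mul_assoc)
    then show ?thesis by (simp add: matrix_inv_right[OF assms(1)])
  qed
  show ?thesis using undo[of X] undo[of Y] assms(2) by metis
qed

lemma mat_conj_mult_vector:
  assumes "invertible P" "M *v (P *v c) = P *v d"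
  shows "mat_conj P M *v c = d"
proof -
  have "P ** mat_conj P M = (P ** matrix_inv P) ** M ** P"
    unfolding mat_conj_def by (simp add: matrix_mul_assoc)
  then have PM: "P ** mat_conj P M = M ** P" by (simp add: matrix_inv_right[OF assms(1)])
  have "P *v (mat_conj P M *v c) = M *v (P *v c)"
    by (simp add: matrix_vector_mul_assoc PM)
  then have "P *v (mat_conj P M *v c) = P *v d" using assms(2) by simp
  then show ?thesis using inj_matrix_vector_mult[OF assms(1)] by (auto dest: injD)
qed

definition commutant :: "'a::semiring_1^'n^'n \<Rightarrow> ('a^'n^'n) set" where
  "commutant T = {X. X ** T = T ** X}"

lemma mat_conj_mem_commutant_iff:
  assumes "invertible P"
  shows "mat_conj P X \<in> commutant (mat_conj P T) \<longleftrightarrow> X \<in> commutant T"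
proof -
  have "mat_conj P X \<in> commutant (mat_conj P T) \<longleftrightarrow> mat_conj P (X ** T) = mat_conj P (T ** X)"
    by (simp add: commutant_def mat_conj_mult[OF assms])
  also have "\<dots> \<longleftrightarrow> X ** T = T ** X"
    using mat_conj_inj[OF assms] by (rule iffI) auto
  finally show ?thesis by (simp add: commutant_def)
qed

definition upper_triangular :: "'a::zero^3^3 \<Rightarrow> bool" where
  "upper_triangular X \<longleftrightarrow> X$2$1 = 0 \<and> X$3$1 = 0 \<and> X$3$2 = 0"

definition triangularisable :: "('a::field^3^3) set \<Rightarrow> bool" where
  "triangularisable S \<longleftrightarrow> (\<exists>P. invertible P \<and> (\<forall>X\<in>S. upper_triangular (mat_conj P X)))"

lemma triangularisableI: "S \<subseteq> Collect upper_triangular \<Longrightarrow> triangularisable S"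
  unfolding triangularisable_def using invertible_mat1 by (metis mat_conj_mat1 mem_Collect_eq subsetD)

lemma triangularisable_commutant_mat_conjD:
  assumes "invertible P" "triangularisable (commutant (mat_conj P T))"
  shows "triangularisable (commutant T)"
proof -
  obtain R where R: "invertible R" "\<forall>X\<in>commutant (mat_conj P T). upper_triangular (mat_conj R X)"
    using assms(2) unfolding triangularisable_def by blast
  have "upper_triangular (mat_conj (P ** R) X)" if "X \<in> commutant T" for X
  proof -
    have "mat_conj P X \<in> commutant (mat_conj P T)"
      using that mat_conj_mem_commutant_iff[OF assms(1)] by blast
    then show ?thesis using R(2) by (simp only: mat_conj_comp[OF assms(1) R(1)])
  qed
  then show ?thesis
    unfolding triangularisable_def using invertible_mult[OF assms(1) R(1)] by blast
qed

lemma matrix_mult_3_entry: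
  "(X ** Y)$i$j = X$i$1 * Y$1$j + X$i$2 * Y$2$j + X$i$3 * Y$3$j" for X Y :: "'a::field^3^3"
  by (simp add: matrix_matrix_mult_def sum_3)

lemma matrix_vector_mult_3:
  "(M::'a::field^3^3) *v v = vector [M$1$1 * v$1 + M$1$2 * v$2 + M$1$3 * v$3,
     M$2$1 * v$1 + M$2$2 * v$2 + M$2$3 * v$3, M$3$1 * v$1 + M$3$2 * v$2 + M$3$3 * v$3]"
  by (simp add: vec_eq_iff forall_3 matrix_vector_mult_def sum_3)

lemma vector_3_eq_iff:
  "(vector [a,b,c] :: 'a::field^3) = vector [a',b',c'] \<longleftrightarrow> a = a' \<and> b = b' \<and> c = c'"
  by (simp add: vec_eq_iff forall_3)

lemma vector_3_scale_add:
  "k *s (vector [a,b,c] :: 'a::field^3) = vector [k*a, k*b, k*c]"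
  "(vector [a,b,c] :: 'a::field^3) + vector [a',b',c'] = vector [a+a', b+b', c+c']"
  by (simp_all add: vec_eq_iff forall_3)

lemmas vector_3_simps = matrix_vector_mult_3 vector_3_eq_iff vector_3_scale_add

lemmas matrix_3_entry_simps = vec_eq_iff forall_3 vector_3 matrix_vector_mult_def sum_3
  matrix_matrix_mult_def diag3_def mat_def

lemma matrix_3_eq_mat1_iff:
  "(X::'a::field^3^3) = mat 1 \<longleftrightarrow>
     X$1$1 = 1 \<and> X$2$2 = 1 \<and> X$3$3 = 1 \<and> X$1$2 = 0 \<and> X$1$3 = 0 \<and> X$2$3 = 0 \<and>
     X$2$1 = 0 \<and> X$3$1 = 0 \<and> X$3$2 = 0"
  by (auto simp: vec_eq_iff forall_3 mat_def)

definition cols3 :: "'a::field^3 \<Rightarrow> 'a^3 \<Rightarrow> 'a^3 \<Rightarrow> 'a^3^3" where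
  "cols3 u v w = (\<chi> i j. if j = 1 then u$i else if j = 2 then v$i else w$i)"

lemma cols3_mult_vector: "cols3 u v w *v vector [x,y,z] = x *s u + y *s v + z *s w"
  unfolding vec_eq_iff forall_3 by (simp add: matrix_vector_mult_def sum_3 cols3_def)

lemma invertible_cols3:
  assumes "u$1 * v$2 * w$3 + v$1 * w$2 * u$3 + w$1 * u$2 * v$3
         - u$1 * w$2 * v$3 - v$1 * u$2 * w$3 - w$1 * v$2 * u$3 \<noteq> 0"
  shows "invertible (cols3 u v w)"
  using assms by (simp add: invertible_det_nz det_3 cols3_def)

lemma upper_triangular_mat_conj_cols3:
  assumes P: "invertible (cols3 u v w)"
    and "M *v u = a *s u" and "M *v v = b *s u + c *s v"
  shows "upper_triangular (mat_conj (cols3 u v w) M)"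
proof -
  have "mat_conj (cols3 u v w) M *v vector [1,0,0] = vector [a,0,0]"
    by (rule mat_conj_mult_vector[OF P]) (simp add: cols3_mult_vector assms)
  moreover have "mat_conj (cols3 u v w) M *v vector [0,1,0] = vector [b,c,0]"
    by (rule mat_conj_mult_vector[OF P]) (simp add: cols3_mult_vector assms)
  ultimately show ?thesis unfolding upper_triangular_def by (simp add: matrix_3_entry_simps)
qed

lemma mat_conj_cols3_eq_diag3:
  assumes P: "invertible (cols3 u v w)"
    and "M *v u = a *s u" and "M *v v = b *s v" and "M *v w = c *s w"
  shows "mat_conj (cols3 u v w) M = diag3 a b c"
proof -
  have "mat_conj (cols3 u v w) M *v vector [1,0,0] = vector [a,0,0]"
    by (rule mat_conj_mult_vector[OF P]) (simp add: cols3_mult_vector assms)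
  moreover have "mat_conj (cols3 u v w) M *v vector [0,1,0] = vector [0,b,0]"
    by (rule mat_conj_mult_vector[OF P]) (simp add: cols3_mult_vector assms)
  moreover have "mat_conj (cols3 u v w) M *v vector [0,0,1] = vector [0,0,c]"
    by (rule mat_conj_mult_vector[OF P]) (simp add: cols3_mult_vector assms)
  ultimately show ?thesis by (simp add: matrix_3_entry_simps)
qed

lemma invertible_diag3_nonzero:
  assumes "invertible (diag3 a b (c::'a::field))"
  shows "a \<noteq> 0" "b \<noteq> 0" "c \<noteq> 0"
proof -
  have "a * b * c \<noteq> 0"
    using assms by (simp add: invertible_det_nz det_3 diag3_def)
  then show "a \<noteq> 0" "b \<noteq> 0" "c \<noteq> 0" by auto
qed

section \<open>Solubility of the invertible upper triangular matrices\<close>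

lemma GL3_simps [simp]:
  "carrier GL3 = {M. invertible M}" "mult GL3 = (**)" "one GL3 = mat 1"
  by (simp_all add: GL3_def)

lemma group_GL3: "group (GL3 :: ('a::field^3^3) monoid)"
proof (rule groupI)
  show "\<exists>y\<in>carrier GL3. y \<otimes>\<^bsub>GL3\<^esub> x = \<one>\<^bsub>GL3\<^esub>" if "x \<in> carrier GL3" for x :: "'a^3^3"
    using that matrix_inv_left[of x] invertible_matrix_inv[of x] by auto
qed (auto simp: invertible_mult invertible_mat1 matrix_mul_assoc)

lemma GL3_inv: "invertible (X::'a::field^3^3) \<Longrightarrow> inv\<^bsub>GL3\<^esub> X = matrix_inv X"
  by (rule group.inv_equality[OF group_GL3])
    (auto simp: matrix_inv_left invertible_matrix_inv)

lemma subgroup_GL3I: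
  assumes "S \<subseteq> {X::'a::field^3^3. invertible X}" "mat 1 \<in> S"
    "\<And>X. X \<in> S \<Longrightarrow> matrix_inv X \<in> S" "\<And>X Y. X \<in> S \<Longrightarrow> Y \<in> S \<Longrightarrow> X ** Y \<in> S"
  shows "subgroup S GL3"
proof (rule group.subgroupI[OF group_GL3])
  show "inv\<^bsub>GL3\<^esub> X \<in> S" if "X \<in> S" for X
  proof -
    have "invertible X" using that assms(1) by auto
    then show ?thesis using that assms(3) by (simp add: GL3_inv)
  qed
qed (use assms in auto)

lemma commutator_mem_subgroup_GL3:
  assumes "subgroup S GL3" "x \<in> S" "y \<in> S"
  shows "x ** y ** matrix_inv x ** matrix_inv y \<in> S"
proof -
  have closed: "X ** Y \<in> S" if "X \<in> S" "Y \<in> S" for X Y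
    using subgroup.m_closed[OF assms(1) that] by simp
  have "matrix_inv X \<in> S" if "X \<in> S" for X
  proof -
    have "invertible X" using subgroup.subset[OF assms(1)] that by auto
    then show ?thesis using subgroup.m_inv_closed[OF assms(1) that] by (simp add: GL3_inv)
  qed
  then show ?thesis using assms(2,3) by (blast intro: closed)
qed

lemma commutator_mult_swap:
  fixes x y :: "'a::field^3^3"
  assumes "invertible x" "invertible y"
  shows "(x ** y ** matrix_inv x ** matrix_inv y) ** (y ** x) = x ** y"
proof -
  have "(x ** y ** matrix_inv x ** matrix_inv y) ** (y ** x)
      = x ** y ** (matrix_inv x ** ((matrix_inv y ** y) ** x))"
    by (simp add: matrix_mul_assoc)
  also have "\<dots> = x ** y" by (simp add: matrix_inv_left assms)
  finally show ?thesis .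
qed

lemma derived_GL3_subset:
  assumes "subgroup K (GL3 :: ('a::field^3^3) monoid)" "H \<subseteq> {X. invertible X}"
    "\<And>x y. x \<in> H \<Longrightarrow> y \<in> H \<Longrightarrow> x ** y ** matrix_inv x ** matrix_inv y \<in> K"
  shows "derived GL3 H \<subseteq> K"
  unfolding derived_def
proof (rule group.generate_subgroup_incl[OF group_GL3 _ assms(1)])
  show "derived_set GL3 H \<subseteq> K"
  proof clarify
    fix x y assume "x \<in> H" "y \<in> H"
    then have "invertible x" "invertible y" using assms(2) by auto
    then show "x \<otimes>\<^bsub>GL3\<^esub> y \<otimes>\<^bsub>GL3\<^esub> inv\<^bsub>GL3\<^esub> x \<otimes>\<^bsub>GL3\<^esub> inv\<^bsub>GL3\<^esub> y \<in> K"
      using assms(3)[OF \<open>x \<in> H\<close> \<open>y \<in> H\<close>] by (simp add: GL3_inv)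
  qed
qed

lemma upper_triangular_left_inverse:
  fixes X Y :: "'a::field^3^3"
  assumes "Y ** X = mat 1" "upper_triangular X"
  shows "upper_triangular Y" "Y$1$1 * X$1$1 = 1" "Y$2$2 * X$2$2 = 1" "Y$3$3 * X$3$3 = 1"
    "Y$1$1 * X$1$2 + Y$1$2 * X$2$2 = 0" "Y$2$2 * X$2$3 + Y$2$3 * X$3$3 = 0"
proof -
  have e: "(Y ** X)$i$j = (if i = j then 1 else 0)" for i j
    using assms(1) by (simp add: mat_def)
  note e' = e[unfolded matrix_mult_3_entry]
  have x: "X$2$1 = 0" "X$3$1 = 0" "X$3$2 = 0" using assms(2) by (auto simp: upper_triangular_def)
  from e'[of 1 1] x show "Y$1$1 * X$1$1 = 1" by simp
  then have x1: "X$1$1 \<noteq> 0" by auto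
  from e'[of 3 1] e'[of 2 1] x x1 have y31: "Y$3$1 = 0" and y21: "Y$2$1 = 0" by simp_all
  from e'[of 2 2] x y21 show "Y$2$2 * X$2$2 = 1" by simp
  then have x2: "X$2$2 \<noteq> 0" by auto
  from e'[of 3 2] x y31 x2 have y32: "Y$3$2 = 0" by simp
  show "upper_triangular Y" using y21 y31 y32 by (simp add: upper_triangular_def)
  from e'[of 3 3] x y31 y32 show "Y$3$3 * X$3$3 = 1" by simp
  from e'[of 1 2] x show "Y$1$1 * X$1$2 + Y$1$2 * X$2$2 = 0" by simp
  from e'[of 2 3] x y21 show "Y$2$2 * X$2$3 + Y$2$3 * X$3$3 = 0" by simp
qed

definition upper_units :: "('a::field^3^3) set" where
  "upper_units = {X. invertible X \<and> upper_triangular X}"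

definition unipotent_upper :: "('a::field^3^3) set" where
  "unipotent_upper = {X \<in> upper_units. X$1$1 = 1 \<and> X$2$2 = 1 \<and> X$3$3 = 1}"

definition unipotent_corner :: "('a::field^3^3) set" where
  "unipotent_corner = {X \<in> unipotent_upper. X$1$2 = 0 \<and> X$2$3 = 0}"

lemmas upper_units_defs = unipotent_corner_def unipotent_upper_def upper_units_def
  upper_triangular_def

lemma matrix_inv_upper_units:
  assumes "X \<in> upper_units"
  shows "upper_triangular (matrix_inv X)" "invertible (matrix_inv X)"
    "matrix_inv X$1$1 * X$1$1 = 1" "matrix_inv X$2$2 * X$2$2 = 1" "matrix_inv X$3$3 * X$3$3 = 1"
    "matrix_inv X$1$1 * X$1$2 + matrix_inv X$1$2 * X$2$2 = 0"
    "matrix_inv X$2$2 * X$2$3 + matrix_inv X$2$3 * X$3$3 = 0"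
  using assms upper_triangular_left_inverse[OF matrix_inv_left, of X] invertible_matrix_inv[of X]
  by (auto simp: upper_units_def)

lemma subgroup_upper_units: "subgroup upper_units (GL3 :: ('a::field^3^3) monoid)"
proof (rule subgroup_GL3I)
  show "mat 1 \<in> (upper_units :: ('a^3^3) set)"
    using invertible_mat1 by (simp add: upper_units_defs mat_def)
  show "matrix_inv X \<in> upper_units" if "X \<in> upper_units" for X :: "'a^3^3"
    using matrix_inv_upper_units[OF that] by (simp add: upper_units_def)
qed (auto simp: upper_units_def invertible_mult upper_triangular_def matrix_mult_3_entry)

lemma subgroup_unipotent_upper: "subgroup unipotent_upper (GL3 :: ('a::field^3^3) monoid)"
proof (rule subgroup_GL3I)
  show "mat 1 \<in> (unipotent_upper :: ('a^3^3) set)"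
    using invertible_mat1 by (simp add: upper_units_defs mat_def)
  show "matrix_inv X \<in> unipotent_upper" if "X \<in> unipotent_upper" for X :: "'a^3^3"
    using that matrix_inv_upper_units[of X] by (simp add: unipotent_upper_def upper_units_def)
qed (auto simp: upper_units_defs invertible_mult matrix_mult_3_entry)

lemma subgroup_unipotent_corner: "subgroup unipotent_corner (GL3 :: ('a::field^3^3) monoid)"
proof (rule subgroup_GL3I)
  show "mat 1 \<in> (unipotent_corner :: ('a^3^3) set)"
    using invertible_mat1 by (simp add: upper_units_defs mat_def)
  show "matrix_inv X \<in> unipotent_corner" if "X \<in> unipotent_corner" for X :: "'a^3^3"
    using that matrix_inv_upper_units[of X]
    by (simp add: unipotent_corner_def unipotent_upper_def upper_units_def)
qed (auto simp: upper_units_defs invertible_mult matrix_mult_3_entry)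

lemma commutator_upper_units:
  assumes "x \<in> upper_units" "y \<in> upper_units"
  shows "x ** y ** matrix_inv x ** matrix_inv y \<in> unipotent_upper"
proof -
  define c where "c = x ** y ** matrix_inv x ** matrix_inv y"
  have c: "c \<in> upper_units"
    unfolding c_def by (rule commutator_mem_subgroup_GL3[OF subgroup_upper_units assms])
  have "invertible x" "invertible y" using assms by (auto simp: upper_units_def)
  then have e: "(c ** (y ** x))$i$j = (x ** y)$i$j" for i j
    unfolding c_def by (simp only: commutator_mult_swap)
  have z: "c$2$1 = 0" "c$3$1 = 0" "c$3$2 = 0" "x$2$1 = 0" "x$3$1 = 0" "x$3$2 = 0"
    "y$2$1 = 0" "y$3$1 = 0" "y$3$2 = 0"
    using assms c by (auto simp: upper_units_defs)
  have nz: "x$1$1 \<noteq> 0" "x$2$2 \<noteq> 0" "x$3$3 \<noteq> 0" "y$1$1 \<noteq> 0" "y$2$2 \<noteq> 0" "y$3$3 \<noteq> 0"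
    using matrix_inv_upper_units(3-5)[OF assms(1)] matrix_inv_upper_units(3-5)[OF assms(2)]
    by auto
  have "c$1$1 * (y$1$1 * x$1$1) = x$1$1 * y$1$1" "c$2$2 * (y$2$2 * x$2$2) = x$2$2 * y$2$2"
    "c$3$3 * (y$3$3 * x$3$3) = x$3$3 * y$3$3"
    using e[of 1 1] e[of 2 2] e[of 3 3] z by (simp_all add: matrix_mult_3_entry)
  then have "c$1$1 = 1" "c$2$2 = 1" "c$3$3 = 1" using nz by (simp_all add: mult.commute)
  then show ?thesis using c by (simp add: c_def unipotent_upper_def)
qed

lemma commutator_unipotent_upper:
  assumes "x \<in> unipotent_upper" "y \<in> unipotent_upper"
  shows "x ** y ** matrix_inv x ** matrix_inv y \<in> unipotent_corner"
proof -
  define c where "c = x ** y ** matrix_inv x ** matrix_inv y"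
  have c: "c \<in> unipotent_upper"
    unfolding c_def by (rule commutator_mem_subgroup_GL3[OF subgroup_unipotent_upper assms])
  have "invertible x" "invertible y" using assms by (auto simp: upper_units_defs)
  then have e: "(c ** (y ** x))$i$j = (x ** y)$i$j" for i j
    unfolding c_def by (simp only: commutator_mult_swap)
  from e[of 1 2] e[of 2 3] assms c have "c$1$2 = 0" "c$2$3 = 0"
    by (auto simp: upper_units_defs matrix_mult_3_entry)
  then show ?thesis using c by (simp add: c_def unipotent_corner_def)
qed

lemma commutator_unipotent_corner:
  assumes "x \<in> unipotent_corner" "y \<in> unipotent_corner"
  shows "x ** y ** matrix_inv x ** matrix_inv y = mat 1"
proof -
  define c where "c = x ** y ** matrix_inv x ** matrix_inv y"
  have c: "c \<in> unipotent_corner"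
    unfolding c_def by (rule commutator_mem_subgroup_GL3[OF subgroup_unipotent_corner assms])
  have "invertible x" "invertible y" using assms by (auto simp: upper_units_defs)
  then have e: "(c ** (y ** x))$i$j = (x ** y)$i$j" for i j
    unfolding c_def by (simp only: commutator_mult_swap)
  from e[of 1 3] assms c have "c$1$3 = 0"
    by (auto simp: upper_units_defs matrix_mult_3_entry)
  then show ?thesis using c by (simp add: c_def upper_units_defs matrix_3_eq_mat1_iff)
qed

lemma derived_cube_upper_units:
  assumes "H \<subseteq> (upper_units :: ('a::field^3^3) set)"
  shows "(derived GL3 ^^ 3) H \<subseteq> {mat 1}"
proof -
  have invertible: "S \<subseteq> {X. invertible X}" if "S \<subseteq> (upper_units :: ('a^3^3) set)" for S
    using that by (auto simp: upper_units_def)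
  have D1: "derived GL3 H \<subseteq> unipotent_upper"
    by (rule derived_GL3_subset[OF subgroup_unipotent_upper invertible[OF assms]])
      (use assms commutator_upper_units in blast)
  have D2: "derived GL3 (derived GL3 H) \<subseteq> unipotent_corner"
  proof (rule derived_GL3_subset[OF subgroup_unipotent_corner invertible])
    show "derived GL3 H \<subseteq> upper_units" using D1 by (auto simp: unipotent_upper_def)
  qed (use D1 commutator_unipotent_upper in blast)
  have "derived GL3 (derived GL3 (derived GL3 H)) \<subseteq> {mat 1}"
  proof (rule derived_GL3_subset[OF _ invertible])
    show "subgroup {mat 1} (GL3 :: ('a^3^3) monoid)"
      using group.triv_subgroup[OF group_GL3] by simp
    show "derived GL3 (derived GL3 H) \<subseteq> upper_units"
      using D2 by (auto simp: unipotent_corner_def unipotent_upper_def)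
  qed (use D2 commutator_unipotent_corner in blast)
  then show ?thesis by (simp add: numeral_3_eq_3)
qed

section \<open>Centralisers under a faithful representation\<close>

lemma (in group) centraliser_subgroup:
  assumes "a \<in> carrier G"
  shows "subgroup (centraliser G a) G"
proof (rule subgroupI)
  show "centraliser G a \<subseteq> carrier G" "centraliser G a \<noteq> {}"
    using assms by (auto simp: centraliser_def intro!: exI[of _ \<one>])
  show "inv g \<in> centraliser G a" if "g \<in> centraliser G a" for g
  proof -
    have g: "g \<in> carrier G" "g \<otimes> a = a \<otimes> g" using that by (auto simp: centraliser_def)
    have "inv g \<otimes> a = inv g \<otimes> a \<otimes> (g \<otimes> inv g)" using g assms by (simp add: m_assoc)
    also have "\<dots> = inv g \<otimes> (g \<otimes> a) \<otimes> inv g" using g assms by (simp add: m_assoc)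
    also have "\<dots> = a \<otimes> inv g" using g(1) assms by (simp add: m_assoc[symmetric])
    finally have "inv g \<otimes> a = a \<otimes> inv g" .
    then show ?thesis using g(1) inv_closed unfolding centraliser_def by blast
  qed
  show "g \<otimes> h \<in> centraliser G a" if "g \<in> centraliser G a" "h \<in> centraliser G a" for g h
  proof -
    have gh: "g \<in> carrier G" "g \<otimes> a = a \<otimes> g" "h \<in> carrier G" "h \<otimes> a = a \<otimes> h"
      using that by (auto simp: centraliser_def)
    have "g \<otimes> h \<otimes> a = g \<otimes> (h \<otimes> a)" using gh assms by (simp add: m_assoc)
    also have "\<dots> = g \<otimes> a \<otimes> h" using gh(1,3,4) assms by (simp add: m_assoc)
    also have "\<dots> = a \<otimes> (g \<otimes> h)" using gh assms by (simp add: m_assoc[symmetric])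
    finally show ?thesis using gh(1,3) unfolding centraliser_def by auto
  qed
qed

locale faithful_GL3_rep = group G for G :: "('g, 'c) monoid_scheme" (structure) +
  fixes \<rho> :: "'g \<Rightarrow> 'f::field^3^3"
  assumes rep_hom: "\<rho> \<in> hom G GL3" and rep_inj: "inj_on \<rho> (carrier G)"
begin

lemma rep_invertible: "g \<in> carrier G \<Longrightarrow> invertible (\<rho> g)"
  using hom_in_carrier[OF rep_hom] by simp

lemma rep_mult: "x \<in> carrier G \<Longrightarrow> y \<in> carrier G \<Longrightarrow> \<rho> (x \<otimes> y) = \<rho> x ** \<rho> y"
  using hom_mult[OF rep_hom] by simp

lemma centraliser_rep:
  assumes "a \<in> carrier G"
  shows "centraliser G a = {g \<in> carrier G. \<rho> g \<in> commutant (\<rho> a)}"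
proof -
  have "g \<otimes> a = a \<otimes> g \<longleftrightarrow> \<rho> g ** \<rho> a = \<rho> a ** \<rho> g" if "g \<in> carrier G" for g
    using that assms rep_mult[of g a] rep_mult[of a g] inj_onD[OF rep_inj, of "g \<otimes> a" "a \<otimes> g"]
    by auto
  then show ?thesis unfolding centraliser_def commutant_def by auto
qed

lemma rep_mem_commutant:
  assumes "a \<in> carrier G" "b \<in> carrier G" "a \<otimes> b = b \<otimes> a"
  shows "\<rho> b \<in> commutant (\<rho> a)"
proof -
  have "b \<in> centraliser G a" using assms by (simp add: centraliser_def)
  then show ?thesis using centraliser_rep[OF assms(1)] by blast
qed

lemma centraliser_eq_carrier_if_commutant_UNIV:
  assumes "a \<in> carrier G" "commutant (\<rho> a) = UNIV"
  shows "centraliser G a = carrier G"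
  using assms by (simp add: centraliser_rep)

lemma centraliser_eq_if_commutant_eq:
  assumes "a \<in> carrier G" "b \<in> carrier G" "commutant (\<rho> a) = commutant (\<rho> b)"
  shows "centraliser G a = centraliser G b"
  using assms by (simp add: centraliser_rep)

lemma rep_conj_diag3_nonzero:
  assumes "a \<in> carrier G" "invertible Q" "mat_conj Q (\<rho> a) = diag3 p q r"
  shows "p \<noteq> 0 \<and> q \<noteq> 0 \<and> r \<noteq> 0"
proof -
  have "invertible (diag3 p q r)"
    using invertible_mat_conj[OF assms(2) rep_invertible[OF assms(1)]] by (simp add: assms(3))
  from invertible_diag3_nonzero[OF this] show ?thesis by blast
qed

lemma solvable_if_triangular_rep:
  assumes H: "subgroup H G" and P: "invertible P"
    and triangular: "\<And>g. g \<in> H \<Longrightarrow> upper_triangular (mat_conj P (\<rho> g))"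
  shows "solvable (G\<lparr>carrier := H\<rparr>)"
proof -
  interpret GL: group "GL3 :: ('f^3^3) monoid" by (rule group_GL3)
  define h where "h g = mat_conj P (\<rho> g)" for g
  have HG: "H \<subseteq> carrier G" using H subgroup.subset by blast
  have "group_hom (G\<lparr>carrier := H\<rparr>) GL3 h"
  proof (intro group_hom.intro group_hom_axioms.intro homI)
    show "group (G\<lparr>carrier := H\<rparr>)" by (rule subgroup_imp_group[OF H])
    show "group (GL3 :: ('f^3^3) monoid)" by (rule group_GL3)
    fix x y assume "x \<in> carrier (G\<lparr>carrier := H\<rparr>)" "y \<in> carrier (G\<lparr>carrier := H\<rparr>)"
    then have "x \<in> carrier G" "y \<in> carrier G" using HG by auto
    then show "h x \<in> carrier GL3" "h (x \<otimes>\<^bsub>G\<lparr>carrier := H\<rparr>\<^esub> y) = h x \<otimes>\<^bsub>GL3\<^esub> h y"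
      using P by (simp_all add: h_def rep_invertible invertible_mat_conj rep_mult mat_conj_mult)
  qed
  moreover have "inj_on h H"
  proof (rule inj_onI)
    fix x y assume "x \<in> H" "y \<in> H" "h x = h y"
    then have "\<rho> x = \<rho> y" using mat_conj_inj[OF P] by (simp add: h_def)
    then show "x = y" using \<open>x \<in> H\<close> \<open>y \<in> H\<close> HG inj_onD[OF rep_inj] by blast
  qed
  moreover have "solvable_seq GL3 (h ` H)"
  proof (rule GL.trivial_derived_seq_imp_solvable)
    show image: "subgroup (h ` H) GL3"
      using group_hom.img_is_subgroup[OF \<open>group_hom _ _ h\<close>] by simp
    have "h ` H \<subseteq> upper_units"
      using HG triangular P rep_invertible by (auto simp: h_def upper_units_def invertible_mat_conj)
    then have "(derived GL3 ^^ 3) (h ` H) \<subseteq> {mat 1}" by (rule derived_cube_upper_units)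
    moreover have "mat 1 \<in> (derived GL3 ^^ 3) (h ` H)"
      using subgroup.one_closed[OF GL.exp_of_derived_is_subgroup[OF image]] by simp
    ultimately show "(derived GL3 ^^ 3) (h ` H) = {\<one>\<^bsub>GL3\<^esub>}" by auto
  qed
  ultimately have "solvable_seq (G\<lparr>carrier := H\<rparr>) H"
    using group_hom.solvable_img_imp_solvable[of "G\<lparr>carrier := H\<rparr>" GL3 h H]
      group.subgroup_self[OF subgroup_imp_group[OF H]] by simp
  then show ?thesis by (simp add: solvable_def)
qed

lemma solvable_centraliser_if_triangularisable:
  assumes "a \<in> carrier G" "triangularisable (commutant (\<rho> a))"
  shows "solvable (G\<lparr>carrier := centraliser G a\<rparr>)"
proof -
  obtain P where "invertible P" "\<forall>X\<in>commutant (\<rho> a). upper_triangular (mat_conj P X)"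
    using assms(2) unfolding triangularisable_def by blast
  then show ?thesis
    using solvable_if_triangular_rep[OF centraliser_subgroup[OF assms(1)]]
    by (simp add: centraliser_rep[OF assms(1)])
qed

end

section \<open>Triangularisation over an algebraically closed field\<close>

lemma exists_eigenvector_3:
  fixes M :: "'a::field^3^3"
  assumes "alg_closed TYPE('a)"
  shows "\<exists>x v. v \<noteq> 0 \<and> M *v v = x *s v"
proof -
  define a where "a = - (M$1$1 + M$2$2 + M$3$3)"
  define b where "b = M$1$1 * M$2$2 + M$1$1 * M$3$3 + M$2$2 * M$3$3
                     - M$1$2 * M$2$1 - M$1$3 * M$3$1 - M$2$3 * M$3$2"
  define c where "c = - det M"
  have "degree [:c, b, a, 1::'a:] \<ge> 1" by simp
  then obtain x where "poly [:c, b, a, 1:] x = 0"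
    using assms unfolding alg_closed_def by blast
  moreover have "poly [:c, b, a, 1:] x = det (mat x - M)"
  proof -
    have entries: "(mat x - M)$i$j = (if i = j then x else 0) - M$i$j" for i j
      by (simp add: mat_def)
    show ?thesis unfolding a_def b_def c_def det_3 entries
      by simp algebra
  qed
  ultimately have "\<not> invertible (mat x - M)" by (simp add: invertible_det_nz)
  then obtain v where v: "v \<noteq> 0" "(mat x - M) *v v = 0"
    using invertible_left_inverse matrix_left_invertible_ker by blast
  then have "M *v v = x *s v"
    by (simp add: vec_eq_iff forall_3 matrix_vector_mult_def sum_3 mat_def algebra_simps)
  then show ?thesis using v(1) by blast
qed

lemma exists_eigenvector_2:
  fixes k11 k12 k21 k22 :: "'a::field"
  assumes "alg_closed TYPE('a)"
  shows "\<exists>\<mu> w1 w2. (w1 \<noteq> 0 \<or> w2 \<noteq> 0) \<and>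
           k11 * w1 + k12 * w2 = \<mu> * w1 \<and> k21 * w1 + k22 * w2 = \<mu> * w2"
proof (cases "k12 = 0")
  case True
  then show ?thesis by (intro exI[of _ k22] exI[of _ 0] exI[of _ 1]) simp
next
  case False
  have "degree [:k11 * k22 - k12 * k21, - (k11 + k22), 1::'a:] \<ge> 1" by simp
  then obtain \<mu> where "poly [:k11 * k22 - k12 * k21, - (k11 + k22), 1:] \<mu> = 0"
    using assms unfolding alg_closed_def by blast
  then have "k21 * k12 + k22 * (\<mu> - k11) = \<mu> * (\<mu> - k11)"
    by (simp add: algebra_simps)
  then show ?thesis using False
    by (intro exI[of _ \<mu>] exI[of _ k12] exI[of _ "\<mu> - k11"]) (simp add: algebra_simps)
qed

lemma invertible_cols3_extend:
  fixes v :: "'a::field^3"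
  assumes "v \<noteq> 0"
  shows "\<exists>y z. invertible (cols3 v y z)"
proof -
  have "v$1 \<noteq> 0 \<or> v$2 \<noteq> 0 \<or> v$3 \<noteq> 0" using assms by (simp add: vec_eq_iff forall_3)
  then consider "v$1 \<noteq> 0" | "v$2 \<noteq> 0" | "v$3 \<noteq> 0" by blast
  then show ?thesis
  proof cases
    case 1
    then have "invertible (cols3 v (vector [0,1,0]) (vector [0,0,1]))" by (simp add: invertible_cols3)
    then show ?thesis by blast
  next
    case 2
    then have "invertible (cols3 v (vector [1,0,0]) (vector [0,0,1]))" by (simp add: invertible_cols3)
    then show ?thesis by blast
  next
    case 3
    then have "invertible (cols3 v (vector [1,0,0]) (vector [0,1,0]))" by (simp add: invertible_cols3)
    then show ?thesis by blast
  qed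
qed

lemma exists_triangularising:
  fixes M :: "'a::field^3^3"
  assumes "alg_closed TYPE('a)"
  shows "\<exists>S. invertible S \<and> upper_triangular (mat_conj S M)"
proof -
  obtain x v where v: "v \<noteq> 0" "M *v v = x *s v" using exists_eigenvector_3[OF assms] by blast
  obtain y z where S1: "invertible (cols3 v y z)" using invertible_cols3_extend[OF v(1)] by blast
  define T where "T = mat_conj (cols3 v y z) M"
  have Te1: "T *v vector [1,0,0] = vector [x,0,0]" unfolding T_def
    by (rule mat_conj_mult_vector[OF S1]) (simp add: cols3_mult_vector v(2) vector_3_scale_add)
  obtain \<mu> w2 w3 where w: "w2 \<noteq> 0 \<or> w3 \<noteq> 0" "T$2$2 * w2 + T$2$3 * w3 = \<mu> * w2"
     "T$3$2 * w2 + T$3$3 * w3 = \<mu> * w3"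
    using exists_eigenvector_2[OF assms, of "T$2$2" "T$2$3" "T$3$2" "T$3$3"] by blast
  obtain e :: "'a^3" where S2: "invertible (cols3 (vector [1,0,0]) (vector [0,w2,w3]) e)"
  proof (cases "w2 = 0")
    case True
    then show ?thesis using w(1) that[of "vector [0,1,0]"] by (simp add: invertible_cols3)
  next
    case False
    then show ?thesis using that[of "vector [0,0,1]"] by (simp add: invertible_cols3)
  qed
  have "upper_triangular (mat_conj (cols3 (vector [1,0,0]) (vector [0,w2,w3]) e) T)"
  proof (rule upper_triangular_mat_conj_cols3[OF S2])
    show "T *v vector [1,0,0] = x *s vector [1,0,0]" using Te1 by (simp add: vector_3_scale_add)
    show "T *v vector [0,w2,w3]
        = (T$1$2 * w2 + T$1$3 * w3) *s vector [1,0,0] + \<mu> *s vector [0,w2,w3]"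
      using w(2,3) by (simp add: vector_3_simps)
  qed
  then show ?thesis
    unfolding T_def using S1 S2 by (metis invertible_mult mat_conj_comp)
qed

lemma mat_conj_cols3_block_upper:
  assumes P: "invertible (cols3 u v w)" and "M *v u = a *s u" and "M *v v = b *s u + c *s v"
    and "M *v w = f *s w"
  shows "upper_triangular (mat_conj (cols3 u v w) M) \<and>
    mat_conj (cols3 u v w) M $1$3 = 0 \<and> mat_conj (cols3 u v w) M $2$3 = 0"
proof -
  have "mat_conj (cols3 u v w) M *v vector [0,0,1] = vector [0,0,f]"
    by (rule mat_conj_mult_vector[OF P]) (simp add: cols3_mult_vector assms)
  then show ?thesis
    using upper_triangular_mat_conj_cols3[OF assms(1-3)] by (simp add: vector_3_simps)
qed

lemma mat_conj_cols3_diag3_llm: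
  assumes "invertible (cols3 (vector [a1, a2, 0]) (vector [b1, b2, 0]) (vector [0, 0, 1]))"
  shows "mat_conj (cols3 (vector [a1, a2, 0]) (vector [b1, b2, 0]) (vector [0, 0, 1]))
           (diag3 l l m) = diag3 l l m"
  by (rule mat_conj_cols3_eq_diag3[OF assms]) (simp_all add: vector_3_simps diag3_def)

lemma exists_block_triangularising:
  fixes M :: "'a::field^3^3"
  assumes "alg_closed TYPE('a)" and "M$1$3 = 0" "M$2$3 = 0" "M$3$1 = 0" "M$3$2 = 0"
  shows "\<exists>R. invertible R \<and> upper_triangular (mat_conj R M) \<and>
           mat_conj R M $1$3 = 0 \<and> mat_conj R M $2$3 = 0 \<and>
           mat_conj R (diag3 l l m) = diag3 l l m"
proof -
  obtain \<mu> w1 w2 where w: "w1 \<noteq> 0 \<or> w2 \<noteq> 0" "M$1$1 * w1 + M$1$2 * w2 = \<mu> * w1"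
     "M$2$1 * w1 + M$2$2 * w2 = \<mu> * w2"
    using exists_eigenvector_2[OF assms(1), of "M$1$1" "M$1$2" "M$2$1" "M$2$2"] by blast
  define u :: "'a^3" where "u = vector [w1, w2, 0]"
  have Mu: "M *v u = \<mu> *s u" using w(2,3) assms by (simp add: u_def vector_3_simps)
  have Me3: "M *v vector [0,0,1] = M$3$3 *s vector [0,0,1]" using assms by (simp add: vector_3_simps)
  show ?thesis
  proof (cases "w1 = 0")
    case False
    define R where "R = cols3 u (vector [0,1,0]) (vector [0,0,1])"
    have R: "invertible R" using False by (simp add: R_def u_def invertible_cols3)
    have Mv: "M *v vector [0,1,0] = (M$1$2 / w1) *s u + (M$2$2 - M$1$2 * w2 / w1) *s vector [0,1,0]"
      using assms False by (simp add: u_def vector_3_simps field_simps)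
    show ?thesis
      using R mat_conj_cols3_block_upper[OF R[unfolded R_def] Mu Mv Me3]
        mat_conj_cols3_diag3_llm[OF R[unfolded R_def u_def]]
      unfolding R_def u_def by blast
  next
    case True
    then have w2: "w2 \<noteq> 0" using w(1) by simp
    define R where "R = cols3 u (vector [1,0,0]) (vector [0,0,1])"
    have R: "invertible R" using w2 True by (simp add: R_def u_def invertible_cols3)
    have Mv: "M *v vector [1,0,0] = (M$2$1 / w2) *s u + M$1$1 *s vector [1,0,0]"
      using assms w2 True by (simp add: u_def vector_3_simps field_simps)
    show ?thesis
      using R mat_conj_cols3_block_upper[OF R[unfolded R_def] Mu Mv Me3]
        mat_conj_cols3_diag3_llm[OF R[unfolded R_def u_def]]
      unfolding R_def u_def by blast
  qed
qed

section \<open>Commutants of triangular matrices\<close>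

lemma commutant_upper_triangular_eqs:
  fixes X T :: "'a::field^3^3"
  assumes "X \<in> commutant T" "upper_triangular T"
  shows
  "X$3$1 * T$1$1 = T$3$3 * X$3$1"
  "X$2$1 * T$1$1 = T$2$2 * X$2$1 + T$2$3 * X$3$1"
  "T$1$2 * X$2$1 + T$1$3 * X$3$1 = 0"
  "X$3$1 * T$1$2 + X$3$2 * T$2$2 = T$3$3 * X$3$2"
  "X$2$1 * T$1$2 = T$2$3 * X$3$2"
  "X$1$1 * T$1$2 + X$1$2 * T$2$2 = T$1$1 * X$1$2 + T$1$2 * X$2$2 + T$1$3 * X$3$2"
  "X$3$1 * T$1$3 + X$3$2 * T$2$3 = 0"
  "X$2$1 * T$1$3 + X$2$2 * T$2$3 + X$2$3 * T$3$3 = T$2$2 * X$2$3 + T$2$3 * X$3$3"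
  "X$1$1 * T$1$3 + X$1$2 * T$2$3 + X$1$3 * T$3$3 = T$1$1 * X$1$3 + T$1$2 * X$2$3 + T$1$3 * X$3$3"
proof -
  have e: "(X ** T)$i$j = (T ** X)$i$j" for i j using assms(1) by (simp add: commutant_def)
  note e' = e[unfolded matrix_mult_3_entry]
  have z: "T$2$1 = 0" "T$3$1 = 0" "T$3$2 = 0" using assms(2) by (auto simp: upper_triangular_def)
  show "X$3$1 * T$1$1 = T$3$3 * X$3$1" using e'[of 3 1] z by simp
  show "X$2$1 * T$1$1 = T$2$2 * X$2$1 + T$2$3 * X$3$1" using e'[of 2 1] z by simp
  show "T$1$2 * X$2$1 + T$1$3 * X$3$1 = 0" using e'[of 1 1] z by (simp add: algebra_simps)
  show "X$3$1 * T$1$2 + X$3$2 * T$2$2 = T$3$3 * X$3$2" using e'[of 3 2] z by simp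
  show "X$2$1 * T$1$2 = T$2$3 * X$3$2" using e'[of 2 2] z by (simp add: algebra_simps)
  show "X$1$1 * T$1$2 + X$1$2 * T$2$2 = T$1$1 * X$1$2 + T$1$2 * X$2$2 + T$1$3 * X$3$2"
    using e'[of 1 2] z by simp
  show "X$3$1 * T$1$3 + X$3$2 * T$2$3 = 0" using e'[of 3 3] z by (simp add: algebra_simps)
  show "X$2$1 * T$1$3 + X$2$2 * T$2$3 + X$2$3 * T$3$3 = T$2$2 * X$2$3 + T$2$3 * X$3$3"
    using e'[of 2 3] z by simp
  show "X$1$1 * T$1$3 + X$1$2 * T$2$3 + X$1$3 * T$3$3 = T$1$1 * X$1$3 + T$1$2 * X$2$3 + T$1$3 * X$3$3"
    using e'[of 1 3] z by simp
qed

lemma mult_commute_eq_imp_zero: "(x::'a::field) * a = c * x \<Longrightarrow> a \<noteq> c \<Longrightarrow> x = 0"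
  by (metis mult.commute mult_left_cancel)

lemma commutant_diag3_llm:
  fixes X :: "'a::field^3^3"
  assumes "l \<noteq> m"
  shows "X \<in> commutant (diag3 l l m) \<longleftrightarrow> X$1$3 = 0 \<and> X$2$3 = 0 \<and> X$3$1 = 0 \<and> X$3$2 = 0"
proof
  assume "X \<in> commutant (diag3 l l m)"
  then have e: "(X ** diag3 l l m)$i$j = (diag3 l l m ** X)$i$j" for i j
    by (simp add: commutant_def)
  show "X$1$3 = 0 \<and> X$2$3 = 0 \<and> X$3$1 = 0 \<and> X$3$2 = 0"
    using e[of 1 3] e[of 2 3] e[of 3 1] e[of 3 2] assms mult_commute_eq_imp_zero
    by (simp add: matrix_mult_3_entry diag3_def)
next
  assume "X$1$3 = 0 \<and> X$2$3 = 0 \<and> X$3$1 = 0 \<and> X$3$2 = 0"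
  then show "X \<in> commutant (diag3 l l m)"
    by (simp add: commutant_def vec_eq_iff forall_3 matrix_mult_3_entry diag3_def mult.commute)
qed

lemma commutant_triangular_distinct_diag:
  fixes T :: "'a::field^3^3"
  assumes T: "upper_triangular T" and "T$1$1 \<noteq> T$2$2" "T$1$1 \<noteq> T$3$3" "T$2$2 \<noteq> T$3$3"
  shows "commutant T \<subseteq> Collect upper_triangular"
proof
  fix X assume "X \<in> commutant T"
  note E = commutant_upper_triangular_eqs[OF this T]
  have 31: "X$3$1 = 0" using mult_commute_eq_imp_zero[OF E(1)] assms by simp
  have "X$2$1 * T$1$1 = T$2$2 * X$2$1" "X$3$2 * T$2$2 = T$3$3 * X$3$2"
    using E(2,4) 31 by simp_all
  then have "X$2$1 = 0" "X$3$2 = 0" using mult_commute_eq_imp_zero assms by blast+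
  with 31 show "X \<in> Collect upper_triangular" by (simp add: upper_triangular_def)
qed

lemma triangularisable_commutant_equal_diag_23:
  fixes T :: "'a::field^3^3"
  assumes T: "upper_triangular T" and ab: "T$1$1 = T$2$2" and bc: "T$2$2 = T$3$3"
    and nz: "T$2$3 \<noteq> 0"
  shows "triangularisable (commutant T)"
proof -
  have lower: "X$3$1 = 0 \<and> X$3$2 = 0 \<and> X$2$1 * T$1$2 = 0" if "X \<in> commutant T" for X
  proof -
    note E = commutant_upper_triangular_eqs[OF that T]
    have "X$3$1 = 0" using E(2) ab nz by simp
    moreover have "X$3$2 = 0" using E(7) \<open>X$3$1 = 0\<close> nz by simp
    ultimately show ?thesis using E(5) by simp
  qed
  show ?thesis
  proof (cases "T$1$2 = 0")
    case False
    then show ?thesis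
      using lower by (auto simp: upper_triangular_def intro!: triangularisableI)
  next
    case True
    \<comment> \<open>\<open>u\<close> spans the image of \<open>T - T$1$1 \<cdot> I\<close>, and with \<open>e\<^sub>1\<close> its kernel; both are
      invariant under the commutant.\<close>
    define u :: "'a^3" where "u = vector [T$1$3, T$2$3, 0]"
    define R where "R = cols3 u (vector [1,0,0]) (vector [0,0,1])"
    have R: "invertible R" using nz by (simp add: R_def u_def invertible_cols3)
    have "upper_triangular (mat_conj R X)" if X: "X \<in> commutant T" for X
      unfolding R_def
    proof (rule upper_triangular_mat_conj_cols3)
      show "invertible (cols3 u (vector [1, 0, 0]) (vector [0, 0, 1]))" using R R_def by simp
      note E = commutant_upper_triangular_eqs[OF X T]
      have "X$3$1 = 0" "X$3$2 = 0" using lower[OF X] by auto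
      then show "X *v u = X$3$3 *s u"
        using E(8,9) ab bc True by (simp add: u_def vector_3_simps algebra_simps)
      show "X *v vector [1, 0, 0]
          = (X$2$1 / T$2$3) *s u + (X$1$1 - X$2$1 * T$1$3 / T$2$3) *s vector [1, 0, 0]"
        using \<open>X$3$1 = 0\<close> nz by (simp add: u_def vector_3_simps field_simps)
    qed
    then show ?thesis using R unfolding triangularisable_def by blast
  qed
qed

lemma triangularisable_commutant_equal_diag_12:
  fixes T :: "'a::field^3^3"
  assumes T: "upper_triangular T" and ab: "T$1$1 = T$2$2" and bc: "T$2$2 = T$3$3"
    and zero: "T$2$3 = 0" and nz: "T$1$2 \<noteq> 0"
  shows "triangularisable (commutant T)"
proof -
  \<comment> \<open>\<open>e\<^sub>1\<close> spans the image of \<open>T - T$1$1 \<cdot> I\<close>, and with \<open>v\<close> its kernel.\<close>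
  define v :: "'a^3" where "v = vector [0, T$1$3, - T$1$2]"
  define R where "R = cols3 (vector [1,0,0]) v (vector [0,1,0])"
  have R: "invertible R" using nz by (simp add: R_def v_def invertible_cols3)
  have "upper_triangular (mat_conj R X)" if X: "X \<in> commutant T" for X
    unfolding R_def
  proof (rule upper_triangular_mat_conj_cols3)
    show "invertible (cols3 (vector [1,0,0]) v (vector [0, 1, 0]))" using R R_def by simp
    note E = commutant_upper_triangular_eqs[OF X T]
    have 31: "X$3$1 = 0" using E(4) ab bc nz by simp
    have 21: "X$2$1 = 0" using E(3) 31 nz by simp
    show "X *v vector [1,0,0] = X$1$1 *s vector [1,0,0]"
      using 31 21 by (simp add: vector_3_simps)
    have e6: "T$1$2 * X$1$1 = T$1$2 * X$2$2 + T$1$3 * X$3$2"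
      using E(6) ab by (simp add: algebra_simps)
    have e9: "T$1$3 * X$1$1 = T$1$2 * X$2$3 + T$1$3 * X$3$3"
      using E(9) ab bc zero by (simp add: algebra_simps)
    have "T$1$2 * (X$2$2 * T$1$3 - X$2$3 * T$1$2)
        = T$1$3 * (T$1$2 * X$2$2) - T$1$2 * (T$1$2 * X$2$3)"
      by (simp add: algebra_simps)
    also have "\<dots> = T$1$3 * (T$1$2 * X$1$1 - T$1$3 * X$3$2) - T$1$2 * (T$1$3 * X$1$1 - T$1$3 * X$3$3)"
      using e6 e9 by (simp add: algebra_simps)
    also have "\<dots> = T$1$3 * (X$3$3 * T$1$2 - X$3$2 * T$1$3)" by (simp add: algebra_simps)
    finally have "T$1$2 * (X$2$2 * T$1$3 - X$2$3 * T$1$2) = T$1$3 * (X$3$3 * T$1$2 - X$3$2 * T$1$3)" .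
    then show "X *v v = (X$1$2 * T$1$3 - X$1$3 * T$1$2) *s vector [1,0,0]
        + ((X$3$3 * T$1$2 - X$3$2 * T$1$3) / T$1$2) *s v"
      using nz by (simp add: v_def vector_3_simps field_simps)
  qed
  then show ?thesis using R unfolding triangularisable_def by blast
qed

lemma commutant_triangular_equal_diag:
  fixes T :: "'a::field^3^3"
  assumes T: "upper_triangular T" and ab: "T$1$1 = T$2$2" and bc: "T$2$2 = T$3$3"
  shows "commutant T = UNIV \<or> triangularisable (commutant T)"
proof -
  consider "T$2$3 \<noteq> 0" | "T$2$3 = 0" "T$1$2 \<noteq> 0" | "T$2$3 = 0" "T$1$2 = 0" "T$1$3 = 0"
    | "T$2$3 = 0" "T$1$2 = 0" "T$1$3 \<noteq> 0"
    by blast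
  then show ?thesis
  proof cases
    case 1
    then show ?thesis using triangularisable_commutant_equal_diag_23[OF T ab bc] by simp
  next
    case 2
    then show ?thesis using triangularisable_commutant_equal_diag_12[OF T ab bc] by simp
  next
    case 3
    then have "X ** T = T ** X" for X
      using T ab bc by (simp add: upper_triangular_def vec_eq_iff forall_3 matrix_mult_3_entry)
    then show ?thesis by (simp add: commutant_def)
  next
    case 4
    have "upper_triangular X" if "X \<in> commutant T" for X
      using commutant_upper_triangular_eqs(3,6,8)[OF that T] 4 ab bc
      by (simp add: upper_triangular_def)
    then show ?thesis by (blast intro: triangularisableI)
  qed
qed

lemma commutant_triangular_first_pair:
  fixes T :: "'a::field^3^3"
  assumes T: "upper_triangular T" and ab: "T$1$1 = T$2$2" and bc: "T$2$2 \<noteq> T$3$3"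
    and "T$1$2 \<noteq> 0"
  shows "commutant T \<subseteq> Collect upper_triangular"
proof
  fix X assume X: "X \<in> commutant T"
  note E = commutant_upper_triangular_eqs[OF X T]
  have 31: "X$3$1 = 0" using mult_commute_eq_imp_zero[OF E(1)] ab bc by simp
  have "X$3$2 * T$2$2 = T$3$3 * X$3$2" using E(4) 31 by simp
  then have "X$3$2 = 0" using mult_commute_eq_imp_zero bc by blast
  moreover have "X$2$1 = 0" using E(3) 31 assms(4) by simp
  ultimately show "X \<in> Collect upper_triangular" using 31 by (simp add: upper_triangular_def)
qed

lemma diagonalise_triangular_first_pair:
  fixes T :: "'a::field^3^3"
  assumes T: "upper_triangular T" and ab: "T$1$1 = T$2$2" and bc: "T$2$2 \<noteq> T$3$3"
    and "T$1$2 = 0"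
  shows "\<exists>R. invertible R \<and> mat_conj R T = diag3 (T$1$1) (T$1$1) (T$3$3)"
proof -
  have z: "T$2$1 = 0" "T$3$1 = 0" "T$3$2 = 0" using T by (auto simp: upper_triangular_def)
  define R where "R = cols3 (vector [1,0,0]) (vector [0,1,0]) (vector [T$1$3, T$2$3, T$3$3 - T$1$1])"
  have R: "invertible R" using ab bc by (simp add: R_def invertible_cols3)
  have "mat_conj R T = diag3 (T$1$1) (T$1$1) (T$3$3)" unfolding R_def
    by (rule mat_conj_cols3_eq_diag3)
      (use R z ab assms(4) in \<open>simp_all add: R_def vector_3_simps algebra_simps\<close>)
  then show ?thesis using R by blast
qed

lemma commutant_triangular_last_pair:
  fixes T :: "'a::field^3^3"
  assumes T: "upper_triangular T" and bc: "T$2$2 = T$3$3" and ab: "T$1$1 \<noteq> T$2$2"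
  shows "commutant T \<subseteq> Collect upper_triangular \<or>
    (\<exists>R. invertible R \<and> mat_conj R T = diag3 (T$2$2) (T$2$2) (T$1$1))"
proof (cases "T$2$3 = 0")
  case False
  have "upper_triangular X" if X: "X \<in> commutant T" for X
  proof -
    note E = commutant_upper_triangular_eqs[OF X T]
    have 31: "X$3$1 = 0" using mult_commute_eq_imp_zero[OF E(1)] ab bc by simp
    have "X$2$1 * T$1$1 = T$2$2 * X$2$1" using E(2) 31 by simp
    then have 21: "X$2$1 = 0" using mult_commute_eq_imp_zero ab by blast
    have "X$3$2 = 0" using E(5) 21 False by simp
    with 31 21 show ?thesis by (simp add: upper_triangular_def)
  qed
  then show ?thesis by blast
next
  case True
  have z: "T$2$1 = 0" "T$3$1 = 0" "T$3$2 = 0" using T by (auto simp: upper_triangular_def)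
  define R where "R = cols3 (vector [T$1$2, T$2$2 - T$1$1, 0]) (vector [T$1$3, 0, T$2$2 - T$1$1])
    (vector [1,0,0])"
  have R: "invertible R" using ab by (simp add: R_def invertible_cols3)
  have "mat_conj R T = diag3 (T$2$2) (T$2$2) (T$1$1)" unfolding R_def
    by (rule mat_conj_cols3_eq_diag3)
      (use R z ab bc True in \<open>simp_all add: R_def vector_3_simps algebra_simps\<close>)
  then show ?thesis using R by blast
qed

lemma commutant_triangular_outer_pair:
  fixes T :: "'a::field^3^3"
  assumes T: "upper_triangular T" and ac: "T$1$1 = T$3$3" and ab: "T$1$1 \<noteq> T$2$2"
  shows "commutant T \<subseteq> Collect upper_triangular \<or>
    (\<exists>R. invertible R \<and> mat_conj R T = diag3 (T$1$1) (T$1$1) (T$2$2))"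
proof (cases "T$1$2 * T$2$3 + T$1$3 * (T$1$1 - T$2$2) = 0")
  case False
  have "upper_triangular X" if X: "X \<in> commutant T" for X
  proof -
    note E = commutant_upper_triangular_eqs[OF X T]
    have e2: "(T$1$1 - T$2$2) * X$2$1 = T$2$3 * X$3$1" using E(2) by (simp add: algebra_simps)
    have "(T$1$2 * T$2$3 + T$1$3 * (T$1$1 - T$2$2)) * X$3$1
        = T$1$2 * ((T$1$1 - T$2$2) * X$2$1) + T$1$3 * (T$1$1 - T$2$2) * X$3$1"
      using e2 by (simp add: algebra_simps)
    also have "\<dots> = (T$1$1 - T$2$2) * (T$1$2 * X$2$1 + T$1$3 * X$3$1)"
      by (simp add: algebra_simps)
    also have "\<dots> = 0" using E(3) by simp
    finally have 31: "X$3$1 = 0" using False by simp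
    have 21: "X$2$1 = 0" using e2 31 ab by simp
    have "X$3$2 * T$2$2 = T$1$1 * X$3$2" using E(4) 31 ac by simp
    then have "X$3$2 = 0" using mult_commute_eq_imp_zero ab by metis
    with 31 21 show ?thesis by (simp add: upper_triangular_def)
  qed
  then show ?thesis by blast
next
  case True
  have z: "T$2$1 = 0" "T$3$1 = 0" "T$3$2 = 0" using T by (auto simp: upper_triangular_def)
  define R where "R = cols3 (vector [1,0,0]) (vector [0, - T$2$3, T$2$2 - T$1$1])
    (vector [T$1$2, T$2$2 - T$1$1, 0])"
  have R: "invertible R" using ab by (simp add: R_def invertible_cols3)
  have t: "T$1$3 * T$2$2 - T$1$2 * T$2$3 = T$1$3 * T$1$1"
    using True by (simp add: algebra_simps)
  have "mat_conj R T = diag3 (T$1$1) (T$1$1) (T$2$2)" unfolding R_def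
    by (rule mat_conj_cols3_eq_diag3)
      (use R z ac t in \<open>simp_all add: R_def vector_3_simps algebra_simps\<close>)
  then show ?thesis using R by blast
qed

lemma commutant_triangular_trichotomy:
  fixes T :: "'a::field^3^3"
  assumes T: "upper_triangular T"
  shows "commutant T = UNIV \<or> triangularisable (commutant T) \<or>
    (\<exists>R l m. invertible R \<and> l \<noteq> m \<and> mat_conj R T = diag3 l l m)"
proof -
  consider "T$1$1 = T$2$2" "T$2$2 = T$3$3" | "T$1$1 = T$2$2" "T$2$2 \<noteq> T$3$3"
    | "T$2$2 = T$3$3" "T$1$1 \<noteq> T$2$2" | "T$1$1 = T$3$3" "T$1$1 \<noteq> T$2$2"
    | "T$1$1 \<noteq> T$2$2" "T$1$1 \<noteq> T$3$3" "T$2$2 \<noteq> T$3$3"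
    by argo
  then show ?thesis
  proof cases
    case 1
    then show ?thesis using commutant_triangular_equal_diag[OF T] by blast
  next
    case 2
    then show ?thesis
      using commutant_triangular_first_pair[OF T] diagonalise_triangular_first_pair[OF T]
        triangularisableI by metis
  next
    case 3
    then show ?thesis using commutant_triangular_last_pair[OF T] triangularisableI by metis
  next
    case 4
    then show ?thesis using commutant_triangular_outer_pair[OF T] triangularisableI by metis
  next
    case 5
    then show ?thesis using commutant_triangular_distinct_diag[OF T] triangularisableI by blast
  qed
qed

lemma commutant_trichotomy:
  fixes T :: "'a::field^3^3"
  assumes "alg_closed TYPE('a)"
  shows "commutant T = UNIV \<or> triangularisable (commutant T) \<or>
    (\<exists>P l m. invertible P \<and> l \<noteq> m \<and> mat_conj P T = diag3 l l m)"
proof -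
  obtain S where S: "invertible S" "upper_triangular (mat_conj S T)"
    using exists_triangularising[OF assms] by blast
  consider (scalar) "commutant (mat_conj S T) = UNIV"
    | (triangular) "triangularisable (commutant (mat_conj S T))"
    | (diagonal) R l m where "invertible R" "l \<noteq> m" "mat_conj R (mat_conj S T) = diag3 l l m"
    using commutant_triangular_trichotomy[OF S(2)] by blast
  then show ?thesis
  proof cases
    case scalar
    then have "commutant T = UNIV" using mat_conj_mem_commutant_iff[OF S(1)] by blast
    then show ?thesis by simp
  next
    case triangular
    then have "triangularisable (commutant T)" by (rule triangularisable_commutant_mat_conjD[OF S(1)])
    then show ?thesis by simp
  next
    case diagonal
    then have "invertible (S ** R)" "mat_conj (S ** R) T = diag3 l l m"
      using S(1) by (simp_all add: invertible_mult mat_conj_comp)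
    then have "\<exists>P l m. invertible P \<and> l \<noteq> m \<and> mat_conj P T = diag3 l l m"
      using diagonal(2) by blast
    then show ?thesis by simp
  qed
qed

lemma diagonalise_block_triangular:
  fixes T :: "'a::field^3^3"
  assumes T: "upper_triangular T" and "T$1$3 = 0" "T$2$3 = 0" and ab: "T$1$1 \<noteq> T$2$2"
    and "T$3$3 = T$1$1 \<or> T$3$3 = T$2$2"
  shows "\<exists>R x y. invertible R \<and> x \<noteq> y \<and> mat_conj R T = diag3 x y x \<and>
    mat_conj R (diag3 l l m) = diag3 l l m"
proof -
  have z: "T$2$1 = 0" "T$3$1 = 0" "T$3$2 = 0" using T by (auto simp: upper_triangular_def)
  from assms(5) show ?thesis
  proof
    assume c: "T$3$3 = T$1$1"
    define R where "R = cols3 (vector [1,0,0]) (vector [T$1$2, T$2$2 - T$1$1, 0]) (vector [0,0,1])"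
    have R: "invertible R" using ab by (simp add: R_def invertible_cols3)
    have "mat_conj R T = diag3 (T$1$1) (T$2$2) (T$1$1)" unfolding R_def
      by (rule mat_conj_cols3_eq_diag3)
        (use R z assms(2,3) c in \<open>simp_all add: R_def vector_3_simps algebra_simps\<close>)
    then show ?thesis
      using R ab mat_conj_cols3_diag3_llm[OF R[unfolded R_def]] by (metis R_def)
  next
    assume c: "T$3$3 = T$2$2"
    define R where "R = cols3 (vector [T$1$2, T$2$2 - T$1$1, 0]) (vector [1,0,0]) (vector [0,0,1])"
    have R: "invertible R" using ab by (simp add: R_def invertible_cols3)
    have "mat_conj R T = diag3 (T$2$2) (T$1$1) (T$2$2)" unfolding R_def
      by (rule mat_conj_cols3_eq_diag3)
        (use R z assms(2,3) c in \<open>simp_all add: R_def vector_3_simps algebra_simps\<close>)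
    then show ?thesis
      using R ab mat_conj_cols3_diag3_llm[OF R[unfolded R_def]] by (metis R_def)
  qed
qed

lemma commutant_block_triangular_classification:
  fixes T :: "'a::field^3^3"
  assumes T: "upper_triangular T" and "T$1$3 = 0" "T$2$3 = 0" and lm: "l \<noteq> m"
  shows "commutant T = UNIV \<or> triangularisable (commutant T) \<or>
    commutant T = commutant (diag3 l l m) \<or>
    (\<exists>R x y. invertible R \<and> x \<noteq> y \<and> mat_conj R T = diag3 x y x \<and>
       mat_conj R (diag3 l l m) = diag3 l l m)"
proof -
  have z: "T$2$1 = 0" "T$3$1 = 0" "T$3$2 = 0" using T by (auto simp: upper_triangular_def)
  consider "T$1$1 = T$2$2" "T$2$2 = T$3$3" | "T$1$1 = T$2$2" "T$2$2 \<noteq> T$3$3" "T$1$2 = 0"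
    | "T$1$1 = T$2$2" "T$2$2 \<noteq> T$3$3" "T$1$2 \<noteq> 0"
    | "T$2$2 = T$3$3" "T$1$1 \<noteq> T$2$2" | "T$1$1 = T$3$3" "T$1$1 \<noteq> T$2$2"
    | "T$1$1 \<noteq> T$2$2" "T$1$1 \<noteq> T$3$3" "T$2$2 \<noteq> T$3$3"
    by argo
  then show ?thesis
  proof cases
    case 1
    then show ?thesis using commutant_triangular_equal_diag[OF T] by blast
  next
    case 2
    then have "T = diag3 (T$1$1) (T$1$1) (T$3$3)"
      using z assms(2,3) by (simp add: vec_eq_iff forall_3 diag3_def)
    then have "commutant T = commutant (diag3 l l m)"
      using commutant_diag3_llm[OF lm] commutant_diag3_llm[of "T$1$1" "T$3$3"] 2 by auto
    then show ?thesis by blast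
  next
    case 3
    then show ?thesis using commutant_triangular_first_pair[OF T] triangularisableI by blast
  next
    case 4
    then have "\<exists>R x y. invertible R \<and> x \<noteq> y \<and> mat_conj R T = diag3 x y x \<and>
        mat_conj R (diag3 l l m) = diag3 l l m"
      by (intro diagonalise_block_triangular[OF T assms(2,3)]) auto
    then show ?thesis by simp
  next
    case 5
    then have "\<exists>R x y. invertible R \<and> x \<noteq> y \<and> mat_conj R T = diag3 x y x \<and>
        mat_conj R (diag3 l l m) = diag3 l l m"
      by (intro diagonalise_block_triangular[OF T assms(2,3)]) auto
    then show ?thesis by simp
  next
    case 6
    then show ?thesis using commutant_triangular_distinct_diag[OF T] triangularisableI by blast
  qed
qed

lemma commutant_classification_commuting:
  fixes S T :: "'a::field^3^3"
  assumes "alg_closed TYPE('a)" and P: "invertible P" and lm: "l \<noteq> m"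
    and S: "mat_conj P S = diag3 l l m" and "T \<in> commutant S"
  shows "commutant T = UNIV \<or> triangularisable (commutant T) \<or> commutant T = commutant S \<or>
    (\<exists>Q x y. invertible Q \<and> x \<noteq> y \<and> mat_conj Q T = diag3 x y x \<and> mat_conj Q S = diag3 l l m)"
proof -
  have "mat_conj P T \<in> commutant (diag3 l l m)"
    using assms(5) mat_conj_mem_commutant_iff[OF P] S by metis
  then obtain R where R: "invertible R" "upper_triangular (mat_conj R (mat_conj P T))"
    "mat_conj R (mat_conj P T) $1$3 = 0" "mat_conj R (mat_conj P T) $2$3 = 0"
    "mat_conj R (diag3 l l m) = diag3 l l m"
    using exists_block_triangularising[OF assms(1)] commutant_diag3_llm[OF lm] by metis
  have PR: "invertible (P ** R)" using P R(1) by (rule invertible_mult)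
  have T': "mat_conj (P ** R) T = mat_conj R (mat_conj P T)"
    and S': "mat_conj (P ** R) S = diag3 l l m"
    using P R(1,5) S by (simp_all add: mat_conj_comp)
  have transfer: "X \<in> commutant U \<longleftrightarrow> mat_conj (P ** R) X \<in> commutant (mat_conj (P ** R) U)"
    for X U using mat_conj_mem_commutant_iff[OF PR] by blast
  consider (scalar) "commutant (mat_conj (P ** R) T) = UNIV"
    | (triangular) "triangularisable (commutant (mat_conj (P ** R) T))"
    | (same) "commutant (mat_conj (P ** R) T) = commutant (diag3 l l m)"
    | (diagonal) R' x y where "invertible R'" "x \<noteq> y"
        "mat_conj R' (mat_conj (P ** R) T) = diag3 x y x" "mat_conj R' (diag3 l l m) = diag3 l l m"
    using commutant_block_triangular_classification[OF R(2-4) lm] unfolding T' by blast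
  then show ?thesis
  proof cases
    case scalar
    have "X \<in> commutant T" for X by (simp add: transfer[of X T] scalar)
    then have "commutant T = UNIV" by blast
    then show ?thesis by simp
  next
    case triangular
    then have "triangularisable (commutant T)" by (rule triangularisable_commutant_mat_conjD[OF PR])
    then show ?thesis by simp
  next
    case same
    have "X \<in> commutant T \<longleftrightarrow> X \<in> commutant S" for X
      by (simp add: transfer[of X T] transfer[of X S] S' same)
    then have "commutant T = commutant S" by blast
    then show ?thesis by simp
  next
    case diagonal
    then have "invertible (P ** R ** R')" "mat_conj (P ** R ** R') T = diag3 x y x"
      "mat_conj (P ** R ** R') S = diag3 l l m"
      using PR S' by (simp_all add: invertible_mult mat_conj_comp)
    then have "\<exists>Q x y. invertible Q \<and> x \<noteq> y \<and> mat_conj Q T = diag3 x y x \<and>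
        mat_conj Q S = diag3 l l m"
      using diagonal(2) by blast
    then show ?thesis by simp
  qed
qed

theorem corollary2p2:
  fixes G :: "('g, 'c) monoid_scheme"
    and \<rho> :: "'g \<Rightarrow> 'f::field ^3^3"
    and A B :: 'g
  assumes "group G"
    and "A \<in> carrier G" and "B \<in> carrier G"
    and "A \<otimes>\<^bsub>G\<^esub> B = B \<otimes>\<^bsub>G\<^esub> A"
    and "centraliser G A \<noteq> carrier G" and "centraliser G B \<noteq> carrier G"
    and "\<not> solvable (G\<lparr>carrier := centraliser G A\<rparr>)"
    and "\<not> solvable (G\<lparr>carrier := centraliser G B\<rparr>)"
    and "centraliser G A \<noteq> centraliser G B"
    and "alg_closed TYPE('f)"
    and "\<rho> \<in> hom G GL3" and "inj_on \<rho> (carrier G)"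
  shows "\<exists>P::'f^3^3. invertible P \<and>
           (\<exists>l m x y. l \<noteq> 0 \<and> m \<noteq> 0 \<and> x \<noteq> 0 \<and> y \<noteq> 0 \<and> l \<noteq> m \<and> x \<noteq> y \<and>
              matrix_inv P ** \<rho> A ** P = diag3 l l m \<and>
              matrix_inv P ** \<rho> B ** P = diag3 x y x)"
proof -
  interpret faithful_GL3_rep G \<rho>
    by (intro faithful_GL3_rep.intro faithful_GL3_rep_axioms.intro) (fact assms)+
  have "\<rho> B \<in> commutant (\<rho> A)"
    using assms(2-4) by (intro rep_mem_commutant) auto
  have A: "commutant (\<rho> A) \<noteq> UNIV" "\<not> triangularisable (commutant (\<rho> A))"
    using assms(5,7) centraliser_eq_carrier_if_commutant_UNIV[OF assms(2)]
      solvable_centraliser_if_triangularisable[OF assms(2)] by blast+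
  have B: "commutant (\<rho> B) \<noteq> UNIV" "\<not> triangularisable (commutant (\<rho> B))"
    "commutant (\<rho> B) \<noteq> commutant (\<rho> A)"
    using assms(6,8,9) centraliser_eq_carrier_if_commutant_UNIV[OF assms(3)]
      solvable_centraliser_if_triangularisable[OF assms(3)]
      centraliser_eq_if_commutant_eq[OF assms(3,2)] by blast+
  obtain P l m where P: "invertible P" "l \<noteq> m" "mat_conj P (\<rho> A) = diag3 l l m"
    using commutant_trichotomy[OF assms(10), of "\<rho> A"] A by (elim disjE) auto
  obtain Q x y where Q: "invertible Q" "x \<noteq> y"
    "mat_conj Q (\<rho> B) = diag3 x y x" "mat_conj Q (\<rho> A) = diag3 l l m"
    using commutant_classification_commuting[OF assms(10) P \<open>\<rho> B \<in> commutant (\<rho> A)\<close>] B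
    by (elim disjE) auto
  show ?thesis
  proof (intro exI conjI)
    show "invertible Q" "l \<noteq> m" "x \<noteq> y" by (fact Q(1) P(2) Q(2))+
    show "matrix_inv Q ** \<rho> A ** Q = diag3 l l m" "matrix_inv Q ** \<rho> B ** Q = diag3 x y x"
      using Q(3,4) by (simp_all add: mat_conj_def)
    show "l \<noteq> 0" "m \<noteq> 0" "x \<noteq> 0" "y \<noteq> 0"
      using rep_conj_diag3_nonzero[OF assms(2) Q(1,4)]
        rep_conj_diag3_nonzero[OF assms(3) Q(1,3)] by simp_all
  qed
qed

end
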